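(* Let $(\Gamma,M)$ be a connected E-GCM graph such that the root set $\Phi_M$ is infinite. Then for every proper subset $J\subsetneq I_n$, the set $\Phi_M^J:=\{\alpha\in\Phi_M^+ : \alpha\notin\mathrm{span}_{\mathbb{R}}\{\alpha_j\}_{j\in J}\}$ is infinite.
   Context: E-GCM $M=(M_{ij})_{i,j\in I_n}$: real, $M_{ii}=2$, $M_{ij}\le0$ for $i\ne j$, $M_{ij}\ne0\iff M_{ji}\ne0$, and nonzero $M_{ij}M_{ji}$ is either $\ge4$ or equals $4\cos^2(\pi/m)$ for an integer $m\ge3$. The E-GCM graph has nodes $\gamma_i$, adjacent iff $M_{ij}\ne0$. The Coxeter group $W$ has generators $s_i$ with $s_i^2=e$ and $(s_is_j)^{m_{ij}}=e$, where $m_{ij}=k$ if $M_{ij}M_{ji}=4\cos^2(\pi/k)$ ($k\ge2$ integer) and $m_{ij}=\infty$ if $M_{ij}M_{ji}\ge4$. $W$ acts on the real vector space $V$ with basis $(\alpha_i)_{i\in I_n}$ by $s_i.\alpha_j=\alpha_j-M_{ij}\alpha_i$. $\Phi_M=\{w.\alpha_i: w\in W, i\in I_n\}$ and $\Phi_M^+$ is the set of roots with all coefficients nonnegative in the basis $(\alpha_i)$. *)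

theory Defs
  imports "HOL-Analysis.Analysis"
begin

text \<open>Index set I_n = {..<n}. The matrix M is a function nat => nat => real (only entries
 with indices < n matter). Vectors of V are functions nat => real supported on {..<n};
 alpha i is the i-th basis vector.\<close>

definition egcm :: "nat \<Rightarrow> (nat \<Rightarrow> nat \<Rightarrow> real) \<Rightarrow> bool" where
  "egcm n M \<longleftrightarrow>
     (\<forall>i<n. M i i = 2) \<and>
     (\<forall>i<n. \<forall>j<n. i \<noteq> j \<longrightarrow> M i j \<le> 0) \<and>
     (\<forall>i<n. \<forall>j<n. M i j \<noteq> 0 \<longleftrightarrow> M j i \<noteq> 0) \<and>
     (\<forall>i<n. \<forall>j<n. M i j * M j i \<noteq> 0 \<longrightarrow>
        (M i j * M j i \<ge> 4 \<or> (\<exists>m::nat. m \<ge> 3 \<and> M i j * M j i = 4 * (cos (pi / real m))\<^sup>2)))"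

definition egcm_edges :: "nat \<Rightarrow> (nat \<Rightarrow> nat \<Rightarrow> real) \<Rightarrow> (nat \<times> nat) set" where
  "egcm_edges n M = {(i, j). i < n \<and> j < n \<and> i \<noteq> j \<and> M i j \<noteq> 0}"

definition egcm_connected :: "nat \<Rightarrow> (nat \<Rightarrow> nat \<Rightarrow> real) \<Rightarrow> bool" where
  "egcm_connected n M \<longleftrightarrow> (\<forall>i<n. \<forall>j<n. (i, j) \<in> (egcm_edges n M)\<^sup>*)"

definition alpha :: "nat \<Rightarrow> nat \<Rightarrow> real" where
  "alpha i = (\<lambda>k. if k = i then 1 else 0)"

text \<open>Simple reflection s_i acting on V: linear extension of
  s_i.alpha_j = alpha_j - M i j alpha_i.\<close>
definition refl :: "nat \<Rightarrow> (nat \<Rightarrow> nat \<Rightarrow> real) \<Rightarrow> nat \<Rightarrow> (nat \<Rightarrow> real) \<Rightarrow> (nat \<Rightarrow> real)" where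
  "refl n M i v = (\<lambda>k. v k - (if k = i then (\<Sum>j<n. M i j * v j) else 0))"

text \<open>Root set Phi_M = W-orbit of the simple roots; since W is generated by the
  involutions s_i, this is the closure of {alpha_i} under the s_i.\<close>
inductive_set roots :: "nat \<Rightarrow> (nat \<Rightarrow> nat \<Rightarrow> real) \<Rightarrow> (nat \<Rightarrow> real) set"
  for n M where
  simple: "i < n \<Longrightarrow> alpha i \<in> roots n M"
| reflect: "v \<in> roots n M \<Longrightarrow> i < n \<Longrightarrow> refl n M i v \<in> roots n M"

definition pos_roots :: "nat \<Rightarrow> (nat \<Rightarrow> nat \<Rightarrow> real) \<Rightarrow> (nat \<Rightarrow> real) set" where
  "pos_roots n M = {v \<in> roots n M. \<forall>k<n. v k \<ge> 0}"

definition span_simple :: "nat set \<Rightarrow> (nat \<Rightarrow> real) set" where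
  "span_simple J = {v. \<exists>c. v = (\<lambda>k. \<Sum>j\<in>J. c j * alpha j k)}"

end

theory Submission
  imports Defs "Jordan_Normal_Form.Determinant"
begin

text \<open>Every root is either nonnegative or nonpositive. This is the classical argument for
  Coxeter groups: if \<open>w s\<close> is reduced then \<open>w(alpha s) \<ge> 0\<close>, by induction on the length of
  \<open>w\<close>, splitting off the longest tail of \<open>w\<close> in the letters \<open>s, t\<close> (\<open>t\<close> the last letter of
  \<open>w\<close>) and settling that rank-two part by an explicit computation with Chebyshev polynomials;
  lengths of equal group elements have equal parity because the reflections have determinant
  \<open>-1\<close>. Hence \<open>\<Phi> = \<Phi>\<^sup>+ \<union> -\<Phi>\<^sup>+\<close>.

  Now pick \<open>k \<notin> J\<close>; every positive root with positive \<open>alpha k\<close>-coordinate lies outside the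
  span, so there are finitely many of them. If \<open>k\<close> and \<open>j\<close> are adjacent, a positive root
  with \<open>alpha j\<close>-coordinate positive either has positive \<open>alpha k\<close>-coordinate or is the
  image under \<open>s\<^sub>k\<close> of such a root. By connectedness only finitely many positive roots exist,
  so \<open>\<Phi>\<close> would be finite.\<close>

primrec word_act :: "nat \<Rightarrow> (nat \<Rightarrow> nat \<Rightarrow> real) \<Rightarrow> nat list \<Rightarrow> (nat \<Rightarrow> real) \<Rightarrow> nat \<Rightarrow> real" where
  "word_act n M [] = id"
| "word_act n M (i # w) = refl n M i \<circ> word_act n M w"

lemma word_act_append: "word_act n M (u @ w) = word_act n M u \<circ> word_act n M w"
  by (induction u) auto

lemma refl_add: "refl n M i (\<lambda>k. u k + v k) = (\<lambda>k. refl n M i u k + refl n M i v k)"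
  by (rule ext) (simp add: refl_def sum.distrib algebra_simps)

lemma refl_smult: "refl n M i (\<lambda>k. a * v k) = (\<lambda>k. a * refl n M i v k)"
  by (rule ext) (simp add: refl_def sum_distrib_left algebra_simps)

lemma refl_uminus: "refl n M i (\<lambda>k. - v k) = (\<lambda>k. - refl n M i v k)"
  by (rule ext) (simp add: refl_def sum_negf)

lemma word_act_add:
  "word_act n M w (\<lambda>k. u k + v k) = (\<lambda>k. word_act n M w u k + word_act n M w v k)"
  by (induction w) (auto simp: refl_add)

lemma word_act_smult: "word_act n M w (\<lambda>k. a * v k) = (\<lambda>k. a * word_act n M w v k)"
  by (induction w) (auto simp: refl_smult)

lemma word_act_uminus: "word_act n M w (\<lambda>k. - v k) = (\<lambda>k. - word_act n M w v k)"
  by (induction w) (auto simp: refl_uminus)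

lemma sum_mult_alpha: "j < n \<Longrightarrow> (\<Sum>l<n. f l * alpha j l) = (f j :: real)"
  by (simp add: alpha_def if_distrib cong: if_cong)

lemma refl_refl:
  assumes "i < n" "M i i = 2"
  shows "refl n M i (refl n M i v) = v"
proof (rule ext)
  fix k
  let ?f = "\<Sum>j<n. M i j * v j"
  have "(\<Sum>j<n. M i j * refl n M i v j) = (\<Sum>j<n. M i j * v j - (if j = i then M i j * ?f else 0))"
    by (rule sum.cong) (auto simp: refl_def algebra_simps)
  also have "\<dots> = - ?f"
    using assms by (simp add: sum_subtractf)
  finally show "refl n M i (refl n M i v) k = v k"
    by (simp add: refl_def)
qed

lemma word_act_double:
  assumes "i < n" "M i i = 2"
  shows "word_act n M (u @ [i, i] @ w) = word_act n M (u @ w)"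
  by (simp add: word_act_append fun_eq_iff refl_refl[of i n M, OF assms])

lemma refl_alpha_self:
  assumes "i < n" "M i i = 2"
  shows "refl n M i (alpha i) = (\<lambda>k. - alpha i k)"
proof -
  have "(\<Sum>j<n. M i j * alpha i j) = 2"
    using assms by (simp add: sum_mult_alpha)
  then show ?thesis
    by (simp add: refl_def fun_eq_iff alpha_def)
qed

lemma sum_mult_plane:
  "i < n \<Longrightarrow> j < n \<Longrightarrow> (\<Sum>l<n. f l * (c * alpha i l + d * alpha j l)) = c * f i + d * (f j :: real)"
  by (simp add: distrib_left sum.distrib mult.left_commute[of _ c] mult.left_commute[of _ d]
      sum_distrib_left[symmetric] sum_mult_alpha)

lemma refl_plane:
  assumes "i < n" "j < n" "i \<noteq> j" "M i i = 2"
  shows "refl n M i (\<lambda>k. c * alpha i k + d * alpha j k)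
           = (\<lambda>k. (- c - M i j * d) * alpha i k + d * alpha j k)"
  using assms sum_mult_plane[of i n j "M i" c d]
  by (simp add: refl_def fun_eq_iff alpha_def algebra_simps)

section \<open>Parity of word length\<close>

definition refl_mat :: "nat \<Rightarrow> (nat \<Rightarrow> nat \<Rightarrow> real) \<Rightarrow> nat \<Rightarrow> real mat" where
  "refl_mat n M i = mat n n (\<lambda>(r, c). (if r = c then 1 else 0) - (if r = i then M i c else 0))"

definition word_mat :: "nat \<Rightarrow> (nat \<Rightarrow> nat \<Rightarrow> real) \<Rightarrow> nat list \<Rightarrow> real mat" where
  "word_mat n M w = mat n n (\<lambda>(r, c). word_act n M w (alpha c) r)"

lemma refl_eq_sum:
  assumes "r < n"
  shows "refl n M i v r = (\<Sum>j<n. ((if r = j then 1 else 0) - (if r = i then M i j else 0)) * v j)"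
proof -
  have "(\<Sum>j<n. ((if r = j then 1 else 0) - (if r = i then M i j else 0)) * v j)
      = (\<Sum>j<n. (if r = j then v j else 0) - (if r = i then M i j * v j else 0))"
    by (rule sum.cong) (auto simp: left_diff_distrib)
  also have "\<dots> = (\<Sum>j<n. if r = j then v j else 0) - (\<Sum>j<n. if r = i then M i j * v j else 0)"
    by (rule sum_subtractf)
  also have "\<dots> = refl n M i v r"
    using assms by (cases "r = i") (simp_all add: refl_def)
  finally show ?thesis
    by (rule sym)
qed

lemma word_mat_Nil: "word_mat n M [] = 1\<^sub>m n"
  by (rule eq_matI) (auto simp: word_mat_def alpha_def)

lemma word_mat_Cons: "word_mat n M (i # w) = refl_mat n M i * word_mat n M w"
  by (rule eq_matI)
     (auto simp: word_mat_def refl_mat_def refl_eq_sum scalar_prod_def lessThan_atLeast0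
       intro!: sum.cong)

lemma det_refl_mat:
  assumes "i < n" "M i i = 2"
  shows "Determinant.det (refl_mat n M i) = -1"
proof -
  have "mat_delete (refl_mat n M i) i i = 1\<^sub>m (n - 1)"
    by (rule eq_matI) (auto simp: mat_delete_def refl_mat_def)
  then have "cofactor (refl_mat n M i) i i = 1"
    by (simp add: cofactor_def)
  moreover have "Determinant.det (refl_mat n M i)
      = (\<Sum>r<n. refl_mat n M i $$ (r, i) * cofactor (refl_mat n M i) r i)"
    using assms(1) by (intro laplace_expansion_column) (auto simp: refl_mat_def)
  moreover have "\<dots> = (\<Sum>r<n. if r = i then - cofactor (refl_mat n M i) i i else 0)"
    using assms by (intro sum.cong) (auto simp: refl_mat_def)
  ultimately show ?thesis
    using assms(1) by simp
qed

lemma det_word_mat: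
  assumes "set w \<subseteq> {..<n}" "\<forall>i<n. M i i = 2"
  shows "Determinant.det (word_mat n M w) = (-1) ^ length w"
  using assms(1)
proof (induction w)
  case Nil
  then show ?case
    by (simp add: word_mat_Nil)
next
  case (Cons i w)
  have "word_mat n M w \<in> carrier_mat n n" "refl_mat n M i \<in> carrier_mat n n"
    by (simp_all add: word_mat_def refl_mat_def)
  with Cons assms(2) show ?case
    by (simp add: word_mat_Cons det_mult det_refl_mat)
qed

lemma word_act_eq_imp_even_length_eq:
  assumes "set u \<subseteq> {..<n}" "set w \<subseteq> {..<n}" "\<forall>i<n. M i i = 2"
    and "word_act n M u = word_act n M w"
  shows "even (length u) \<longleftrightarrow> even (length w)"
proof -
  have "(-1 :: real) ^ length u = (-1) ^ length w"
    using assms det_word_mat[of u n M] det_word_mat[of w n M] by (simp add: word_mat_def)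
  then show ?thesis
    by (metis neg_one_even_power neg_one_odd_power one_neq_neg_one)
qed

lemma roots_eq_word_act_alpha:
  "v \<in> roots n M \<Longrightarrow> \<exists>w i. set w \<subseteq> {..<n} \<and> i < n \<and> v = word_act n M w (alpha i)"
proof (induction rule: roots.induct)
  case (simple i)
  then show ?case
    by (intro exI[of _ "[]"] exI[of _ i]) auto
next
  case (reflect v i)
  then obtain w j where "set w \<subseteq> {..<n}" "j < n" "v = word_act n M w (alpha j)"
    by blast
  with reflect show ?case
    by (intro exI[of _ "i # w"] exI[of _ j]) auto
qed

lemma roots_uminus:
  assumes "\<forall>i<n. M i i = 2" "v \<in> roots n M"
  shows "(\<lambda>k. - v k) \<in> roots n M"
  using assms(2)
proof (induction rule: roots.induct)
  case (simple i)
  then have "refl n M i (alpha i) \<in> roots n M"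
    by (intro roots.intros)
  with simple assms(1) show ?case
    by (simp add: refl_alpha_self)
next
  case (reflect v i)
  then show ?case
    using roots.reflect[OF reflect.IH reflect.hyps(2)] by (simp add: refl_uminus)
qed

lemma roots_vanish: "v \<in> roots n M \<Longrightarrow> n \<le> k \<Longrightarrow> v k = 0"
  by (induction rule: roots.induct) (auto simp: alpha_def refl_def)

lemma roots_nonzero:
  assumes "\<forall>i<n. M i i = 2" "v \<in> roots n M"
  shows "v \<noteq> (\<lambda>k. 0)"
  using assms(2)
proof (induction rule: roots.induct)
  case (simple i)
  then show ?case
    by (auto simp: alpha_def fun_eq_iff)
next
  case (reflect v i)
  have "refl n M i (\<lambda>k. 0) = (\<lambda>k. 0)"
    by (simp add: refl_def fun_eq_iff)
  with reflect assms(1) show ?case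
    by (metis refl_refl)
qed

lemma nonneg_root_has_pos_coord:
  assumes "\<forall>i<n. M i i = 2" "v \<in> roots n M" "\<forall>k<n. 0 \<le> v k"
  shows "\<exists>k<n. 0 < v k"
proof (rule ccontr)
  assume "\<not> ?thesis"
  then have "\<forall>k. v k = 0"
    using assms(3) roots_vanish[OF assms(2)] by (metis linorder_not_less order.antisym)
  then show False
    using roots_nonzero[OF assms(1,2)] by auto
qed

section \<open>Reduced words\<close>

definition reduced :: "nat \<Rightarrow> (nat \<Rightarrow> nat \<Rightarrow> real) \<Rightarrow> nat list \<Rightarrow> bool" where
  "reduced n M w \<longleftrightarrow> set w \<subseteq> {..<n} \<and>
     (\<forall>u. set u \<subseteq> {..<n} \<longrightarrow> word_act n M u = word_act n M w \<longrightarrow> length w \<le> length u)"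

lemma reduced_set: "reduced n M w \<Longrightarrow> set w \<subseteq> {..<n}"
  by (simp add: reduced_def)

lemma reduced_length_le:
  "reduced n M w \<Longrightarrow> set u \<subseteq> {..<n} \<Longrightarrow> word_act n M u = word_act n M w \<Longrightarrow> length w \<le> length u"
  by (simp add: reduced_def)

lemma reduced_if_same_length:
  "reduced n M w \<Longrightarrow> set u \<subseteq> {..<n} \<Longrightarrow> word_act n M u = word_act n M w \<Longrightarrow>
    length u = length w \<Longrightarrow> reduced n M u"
  by (auto simp: reduced_def)

lemma reduced_exists:
  assumes "set w \<subseteq> {..<n}"
  shows "\<exists>u. reduced n M u \<and> word_act n M u = word_act n M w"
proof -
  let ?P = "\<lambda>u. set u \<subseteq> {..<n} \<and> word_act n M u = word_act n M w"
  obtain u where "?P u" "\<forall>u'. ?P u' \<longrightarrow> length u \<le> length u'"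
    using ex_has_least_nat[of ?P w length] assms by blast
  then show ?thesis
    by (auto simp: reduced_def)
qed

lemma reduced_appendD1:
  assumes "reduced n M (u @ w)"
  shows "reduced n M u"
  unfolding reduced_def
proof (intro conjI allI impI)
  show "set u \<subseteq> {..<n}"
    using reduced_set[OF assms] by simp
  fix u' assume "set u' \<subseteq> {..<n}" "word_act n M u' = word_act n M u"
  then have "length (u @ w) \<le> length (u' @ w)"
    using assms reduced_set[OF assms] by (intro reduced_length_le) (auto simp: word_act_append)
  then show "length u \<le> length u'"
    by simp
qed

lemma reduced_appendD2:
  assumes "reduced n M (u @ w)"
  shows "reduced n M w"
  unfolding reduced_def
proof (intro conjI allI impI)
  show "set w \<subseteq> {..<n}"
    using reduced_set[OF assms] by simp
  fix w' assume "set w' \<subseteq> {..<n}" "word_act n M w' = word_act n M w"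
  then have "length (u @ w) \<le> length (u @ w')"
    using assms reduced_set[OF assms] by (intro reduced_length_le) (auto simp: word_act_append)
  then show "length w \<le> length w'"
    by simp
qed

lemma not_reduced_double:
  assumes "\<forall>i<n. M i i = 2"
  shows "\<not> reduced n M (u @ [i, i] @ w)"
proof
  assume red: "reduced n M (u @ [i, i] @ w)"
  then have "set (u @ w) \<subseteq> {..<n}" "i < n"
    using reduced_set[OF red] by auto
  moreover have "word_act n M (u @ w) = word_act n M (u @ [i, i] @ w)"
    using assms \<open>i < n\<close> by (simp only: word_act_double)
  ultimately have "length (u @ [i, i] @ w) \<le> length (u @ w)"
    using reduced_length_le[OF red] by blast
  then show False
    by simp
qed

text \<open>By parity, appending a letter changes the length in the group by exactly one.\<close>
lemma not_reduced_snoc_shorter: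
  assumes "\<forall>i<n. M i i = 2" "reduced n M w" "s < n" "\<not> reduced n M (w @ [s])"
  shows "\<exists>u. set u \<subseteq> {..<n} \<and> word_act n M u = word_act n M (w @ [s]) \<and> length u + 1 = length w"
proof -
  have w: "set (w @ [s]) \<subseteq> {..<n}"
    using assms(2,3) reduced_set by auto
  then obtain u where u: "set u \<subseteq> {..<n}" "word_act n M u = word_act n M (w @ [s])"
      "length u < length w + 1"
    using assms(4) unfolding reduced_def by force
  have "length u \<noteq> length w"
    using word_act_eq_imp_even_length_eq[OF u(1) w assms(1) u(2)] by auto
  moreover have "word_act n M (u @ [s]) = word_act n M w"
    using u(2) assms(1,3) by (simp add: word_act_append fun_eq_iff refl_refl)
  then have "length w \<le> length (u @ [s])"
    using reduced_length_le[OF assms(2), of "u @ [s]"] u(1) assms(3) by simp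
  ultimately show ?thesis
    using u by auto
qed

section \<open>Rank two\<close>

lemma egcm_diag: "egcm n M \<Longrightarrow> \<forall>i<n. M i i = 2"
  by (simp add: egcm_def)

lemma egcm_off_diag_nonpos: "egcm n M \<Longrightarrow> i < n \<Longrightarrow> j < n \<Longrightarrow> i \<noteq> j \<Longrightarrow> M i j \<le> 0"
  by (simp add: egcm_def)

lemma egcm_eq_0_iff: "egcm n M \<Longrightarrow> i < n \<Longrightarrow> j < n \<Longrightarrow> M i j = 0 \<longleftrightarrow> M j i = 0"
  by (auto simp: egcm_def)

lemma egcm_pair_cases:
  assumes "egcm n M" "s < n" "t < n"
  obtains "4 \<le> M s t * M t s"
  | m :: nat where "2 \<le> m" "M s t * M t s = 4 * (cos (pi / real m))\<^sup>2"
proof (cases "M s t * M t s = 0")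
  case True
  then show ?thesis
    using that(2)[of 2] by simp
next
  case False
  with assms have "4 \<le> M s t * M t s \<or> (\<exists>m::nat. 3 \<le> m \<and> M s t * M t s = 4 * (cos (pi / real m))\<^sup>2)"
    unfolding egcm_def by blast
  then show ?thesis
  proof
    assume "\<exists>m::nat. 3 \<le> m \<and> M s t * M t s = 4 * (cos (pi / real m))\<^sup>2"
    then obtain m :: nat where "3 \<le> m" "M s t * M t s = 4 * (cos (pi / real m))\<^sup>2"
      by blast
    then show ?thesis
      using that(2)[of m] by simp
  qed (rule that(1))
qed

text \<open>The word \<open>alt_word s t k\<close> alternates, has length \<open>k\<close> and ends with \<open>t\<close>, so that
  \<open>alt_word s t k @ [s]\<close> alternates as well.\<close>
primrec alt_word :: "nat \<Rightarrow> nat \<Rightarrow> nat \<Rightarrow> nat list" where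
  "alt_word s t 0 = []"
| "alt_word s t (Suc k) = (if even k then t else s) # alt_word s t k"

lemma length_alt_word [simp]: "length (alt_word s t k) = k"
  by (induction k) auto

lemma set_alt_word: "set (alt_word s t k) \<subseteq> {s, t}"
  by (induction k) auto

lemma alt_word_Suc_snoc: "alt_word s t (Suc k) = alt_word t s k @ [t]"
  by (induction k) auto

lemma alt_word_add: "\<exists>u. alt_word s t (j + k) = u @ alt_word s t k"
proof (induction j)
  case (Suc j)
  then obtain u where "alt_word s t (j + k) = u @ alt_word s t k"
    by blast
  then show ?case
    by (intro exI[of _ "(if even (j + k) then t else s) # u"]) simp
qed simp

lemma hd_alt_word_snoc: "hd (alt_word s t k @ [s]) = (if even k then s else t)"
  by (cases k) auto

text \<open>\<open>chebU y (k + 1)\<close> is the Chebyshev polynomial of the second kind \<open>U\<^sub>k\<close> at \<open>y / 2\<close>.\<close>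
fun chebU :: "real \<Rightarrow> nat \<Rightarrow> real" where
  "chebU y 0 = 0"
| "chebU y (Suc 0) = 1"
| "chebU y (Suc (Suc k)) = y * chebU y (Suc k) - chebU y k"

lemma chebU_nonneg_mono:
  assumes "2 \<le> y"
  shows "0 \<le> chebU y k \<and> chebU y k \<le> chebU y (Suc k)"
proof (induction k)
  case 0
  then show ?case
    by simp
next
  case (Suc k)
  then have "chebU y (Suc k) \<le> (y - 1) * chebU y (Suc k)"
    using assms mult_right_mono[of 1 "y - 1" "chebU y (Suc k)"] by simp
  with Suc show ?case
    by (simp add: algebra_simps)
qed

lemma chebU_cos:
  assumes "sin \<theta> \<noteq> 0"
  shows "chebU (2 * cos \<theta>) k = sin (real k * \<theta>) / sin \<theta>"
proof (induction k rule: induct_nat_012)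
  case (ge2 k)
  define x where "x = real (Suc k) * \<theta>"
  have "real (Suc (Suc k)) * \<theta> = x + \<theta>" "real k * \<theta> = x - \<theta>"
    by (simp_all add: x_def algebra_simps)
  then have "sin (real (Suc (Suc k)) * \<theta>) = 2 * cos \<theta> * sin x - sin (real k * \<theta>)"
    by (simp add: sin_add sin_diff)
  with ge2 assms show ?case
    by (simp add: x_def field_simps)
qed (use assms in auto)

lemma chebU_cos_pi_div:
  assumes "2 \<le> m"
  defines "y \<equiv> 2 * cos (pi / real m)"
  shows "\<And>j. j \<le> m \<Longrightarrow> 0 \<le> chebU y j"
    and "chebU y m = 0" and "chebU y (m - 1) = 1" and "chebU y (Suc m) = -1"
proof -
  define \<theta> where "\<theta> = pi / real m"
  have \<theta>: "0 < \<theta>" "\<theta> < pi" "real m * \<theta> = pi"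
    using assms by (auto simp: \<theta>_def field_simps)
  then have sin: "0 < sin \<theta>"
    by (simp add: sin_gt_zero)
  then have U: "chebU y j = sin (real j * \<theta>) / sin \<theta>" for j
    using chebU_cos[of \<theta> j] by (simp add: y_def \<theta>_def)
  show "0 \<le> chebU y j" if "j \<le> m" for j
  proof -
    have "real j * \<theta> \<le> real m * \<theta>"
      using that \<theta>(1) by (simp add: mult_right_mono)
    then show ?thesis
      using U sin \<theta> by (simp add: sin_ge_zero)
  qed
  show "chebU y m = 0"
    using U \<theta>(3) by simp
  have "real (m - 1) * \<theta> = pi - \<theta>"
    using \<theta>(3) assms(1) by (simp add: of_nat_diff algebra_simps)
  then show "chebU y (m - 1) = 1"
    using U sin by simp
  have "real (Suc m) * \<theta> = pi + \<theta>"
    using \<theta>(3) by (simp add: algebra_simps)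
  then show "chebU y (Suc m) = -1"
    using U sin by simp
qed

text \<open>In the applications \<open>y\<^sup>2 = M s t * M t s\<close> and \<open>\<beta> = - M t s / y\<close>.\<close>
lemma word_act_alt_word_alpha:
  assumes "s < n" "t < n" "s \<noteq> t" "M s s = 2" "M t t = 2"
    and "\<beta> * y = - M t s" "M s t * \<beta> = - y"
  shows "word_act n M (alt_word s t k) (alpha s)
    = (\<lambda>l. (if even k then chebU y (Suc k) else chebU y k) * alpha s l
           + \<beta> * (if even k then chebU y k else chebU y (Suc k)) * alpha t l)"
proof (induction k)
  case 0
  then show ?case
    by simp
next
  case (Suc k)
  show ?case
  proof (cases "even k")
    case True
    have coeff: "\<beta> * chebU y (Suc (Suc k)) = - (\<beta> * chebU y k) - M t s * chebU y (Suc k)"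
      using assms(6) by (simp add: right_diff_distrib mult.assoc[symmetric])
    from Suc.IH True have "word_act n M (alt_word s t k) (alpha s)
        = (\<lambda>l. (\<beta> * chebU y k) * alpha t l + chebU y (Suc k) * alpha s l)"
      by (simp add: fun_eq_iff algebra_simps)
    with True have "word_act n M (alt_word s t (Suc k)) (alpha s)
        = refl n M t (\<lambda>l. (\<beta> * chebU y k) * alpha t l + chebU y (Suc k) * alpha s l)"
      by simp
    also have "\<dots> = (\<lambda>l. (- (\<beta> * chebU y k) - M t s * chebU y (Suc k)) * alpha t l
        + chebU y (Suc k) * alpha s l)"
      by (rule refl_plane) (use assms in auto)
    also have "\<dots> = (\<lambda>l. chebU y (Suc k) * alpha s l + \<beta> * chebU y (Suc (Suc k)) * alpha t l)"
      by (subst coeff) (simp add: fun_eq_iff algebra_simps)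
    finally show ?thesis
      using True by simp
  next
    case False
    have coeff: "- chebU y k - M s t * (\<beta> * chebU y (Suc k)) = chebU y (Suc (Suc k))"
      using assms(7) by (simp add: mult.assoc[symmetric])
    from Suc.IH False have "word_act n M (alt_word s t (Suc k)) (alpha s)
        = refl n M s (\<lambda>l. chebU y k * alpha s l + (\<beta> * chebU y (Suc k)) * alpha t l)"
      by simp
    also have "\<dots> = (\<lambda>l. (- chebU y k - M s t * (\<beta> * chebU y (Suc k))) * alpha s l
        + (\<beta> * chebU y (Suc k)) * alpha t l)"
      by (rule refl_plane) (use assms in auto)
    finally show ?thesis
      using False by (simp only: coeff) simp
  qed
qed

lemma square_eq_mult_div_identities:
  fixes a b y :: real
  assumes "y * y = a * b" "a = 0 \<longleftrightarrow> b = 0"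
  shows "- b / y * y = - b" "a * (- b / y) = - y"
proof -
  show "- b / y * y = - b"
    using assms by (cases "y = 0") auto
  show "a * (- b / y) = - y"
    using assms by (cases "y = 0") (auto simp: field_simps)
qed

lemma word_act_alt_word_alpha_braid:
  assumes "egcm n M" "s < n" "t < n" "s \<noteq> t" "2 \<le> m"
    and "M s t * M t s = 4 * (cos (pi / real m))\<^sup>2"
  shows "word_act n M (alt_word s t m) (alpha s) = word_act n M (alt_word t s m) (alpha s)"
proof -
  define y where "y = 2 * cos (pi / real m)"
  have diag: "M s s = 2" "M t t = 2"
    using egcm_diag[OF assms(1)] assms(2,3) by auto
  have "y * y = M s t * M t s"
    using assms(6) by (simp add: y_def power2_eq_square)
  note closed = word_act_alt_word_alpha[OF assms(2-4) diag
      square_eq_mult_div_identities[OF this egcm_eq_0_iff[OF assms(1-3)]]]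
  have U: "chebU y m = 0" "chebU y (m - 1) = 1" "chebU y (Suc m) = -1"
    using chebU_cos_pi_div[OF assms(5)] by (simp_all add: y_def)
  have m: "Suc (m - 1) = m" "even (m - 1) \<longleftrightarrow> odd m"
    using assms(5) by auto
  have "word_act n M (alt_word t s m) = word_act n M (alt_word s t (m - 1)) \<circ> refl n M s"
    using alt_word_Suc_snoc[of t s "m - 1"] m(1) by (simp add: word_act_append)
  then have "word_act n M (alt_word t s m) (alpha s)
      = (\<lambda>l. - word_act n M (alt_word s t (m - 1)) (alpha s) l)"
    using refl_alpha_self[of s n M] assms(2) diag(1) by (simp add: word_act_uminus)
  then show ?thesis
    using closed[of m] closed[of "m - 1"] U m by (cases "even m") (simp_all add: fun_eq_iff)
qed

lemma word_act_fix:
  assumes "set w \<subseteq> {s, t}" "(\<Sum>j<n. M s j * r j) = 0" "(\<Sum>j<n. M t j * r j) = 0"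
  shows "word_act n M w r = r"
  using assms(1) by (induction w) (use assms(2,3) in \<open>auto simp: refl_def\<close>)

lemma pair_decomposition:
  assumes "s < n" "t < n" "s \<noteq> t" "M s s = 2" "M t t = 2" "M s t * M t s \<noteq> 4"
  obtains c d r where "v = (\<lambda>k. c * alpha s k + d * alpha t k + r k)"
    "(\<Sum>j<n. M s j * r j) = 0" "(\<Sum>j<n. M t j * r j) = 0"
proof -
  define fs ft where "fs = (\<Sum>j<n. M s j * v j)" and "ft = (\<Sum>j<n. M t j * v j)"
  define D where "D = 4 - M s t * M t s"
  define c d where "c = (2 * fs - M s t * ft) / D" and "d = (2 * ft - M t s * fs) / D"
  define r where "r = (\<lambda>k. v k - (c * alpha s k + d * alpha t k))"
  have "D \<noteq> 0"
    using assms(6) by (simp add: D_def)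
  have "(\<Sum>j<n. M s j * r j) = fs - (c * M s s + d * M s t)"
    "(\<Sum>j<n. M t j * r j) = ft - (c * M t s + d * M t t)"
    using sum_mult_plane[OF assms(1,2)]
    by (simp_all add: r_def fs_def ft_def right_diff_distrib sum_subtractf)
  moreover have "c * M s s + d * M s t = fs" "c * M t s + d * M t t = ft"
  proof -
    have cD: "c * D = 2 * fs - M s t * ft" and dD: "d * D = 2 * ft - M t s * fs"
      using \<open>D \<noteq> 0\<close> by (simp_all add: c_def d_def)
    have "(c * M s s + d * M s t) * D = 2 * (c * D) + M s t * (d * D)"
      "(c * M t s + d * M t t) * D = M t s * (c * D) + 2 * (d * D)"
      using assms(4,5) by (simp_all add: algebra_simps)
    then have "(c * M s s + d * M s t) * D = fs * D" "(c * M t s + d * M t t) * D = ft * D"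
      unfolding cD dD by (simp_all add: D_def algebra_simps)
    with \<open>D \<noteq> 0\<close> show "c * M s s + d * M s t = fs" "c * M t s + d * M t t = ft"
      by simp_all
  qed
  ultimately show ?thesis
    using that[of c d r] by (simp add: r_def)
qed

lemma word_act_eq_if_eq_on_pair:
  assumes "s < n" "t < n" "s \<noteq> t" "M s s = 2" "M t t = 2" "M s t * M t s \<noteq> 4"
    and "set u \<subseteq> {s, t}" "set w \<subseteq> {s, t}"
    and "word_act n M u (alpha s) = word_act n M w (alpha s)"
    and "word_act n M u (alpha t) = word_act n M w (alpha t)"
  shows "word_act n M u = word_act n M w"
proof
  fix v
  obtain c d r where v: "v = (\<lambda>k. c * alpha s k + d * alpha t k + r k)"
    and r: "(\<Sum>j<n. M s j * r j) = 0" "(\<Sum>j<n. M t j * r j) = 0"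
    using pair_decomposition[OF assms(1-6)] .
  have "word_act n M x v
      = (\<lambda>k. c * word_act n M x (alpha s) k + d * word_act n M x (alpha t) k + r k)"
    if "set x \<subseteq> {s, t}" for x
    using word_act_fix[OF that r] by (simp add: v word_act_add word_act_smult)
  then show "word_act n M u v = word_act n M w v"
    using assms(7-10) by simp
qed

lemma braid_relation:
  assumes "egcm n M" "s < n" "t < n" "s \<noteq> t" "2 \<le> m"
    and "M s t * M t s = 4 * (cos (pi / real m))\<^sup>2"
  shows "word_act n M (alt_word s t m) = word_act n M (alt_word t s m)"
proof (rule word_act_eq_if_eq_on_pair[OF assms(2-4)])
  have "0 < sin (pi / real m)"
    using assms(5) by (intro sin_gt_zero) (auto simp: field_simps)
  then have "0 < (sin (pi / real m))\<^sup>2"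
    by simp
  then show "M s t * M t s \<noteq> 4"
    using assms(6) sin_cos_squared_add[of "pi / real m"] by linarith
  show "word_act n M (alt_word s t m) (alpha s) = word_act n M (alt_word t s m) (alpha s)"
    by (rule word_act_alt_word_alpha_braid[OF assms])
  show "word_act n M (alt_word s t m) (alpha t) = word_act n M (alt_word t s m) (alpha t)"
    using word_act_alt_word_alpha_braid[OF assms(1,3,2) assms(4)[symmetric] assms(5)] assms(6)
    by (simp add: mult.commute)
qed (use assms(1-3) set_alt_word in \<open>auto simp: egcm_diag\<close>)

lemma reduced_alt_word_shorter_than_braid:
  assumes "\<forall>i<n. M i i = 2" "s < n" "t < n" "1 \<le> m"
    and "word_act n M (alt_word s t m) = word_act n M (alt_word t s m)"
    and "reduced n M (alt_word t s (Suc k))"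
  shows "k < m"
proof (rule ccontr)
  assume "\<not> k < m"
  then obtain u where u: "alt_word t s (Suc k) = u @ alt_word t s (Suc m)"
    using alt_word_add[of t s "k - m" "Suc m"] by auto
  have red: "reduced n M (alt_word t s (Suc m))"
    using assms(6) unfolding u by (rule reduced_appendD2)
  have "word_act n M (alt_word t s (Suc m)) = word_act n M (alt_word s t m) \<circ> refl n M s"
    by (simp only: alt_word_Suc_snoc word_act_append) simp
  also have "\<dots> = word_act n M (alt_word s t (m - 1) @ [s]) \<circ> refl n M s"
    using assms(4,5) alt_word_Suc_snoc[of t s "m - 1"] by simp
  also have "\<dots> = word_act n M (alt_word s t (m - 1)) \<circ> (refl n M s \<circ> refl n M s)"
    by (simp add: word_act_append comp_assoc)
  also have "\<dots> = word_act n M (alt_word s t (m - 1))"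
    using assms(1,2) by (simp add: fun_eq_iff refl_refl)
  finally have "word_act n M (alt_word s t (m - 1)) = word_act n M (alt_word t s (Suc m))"
    by (rule sym)
  moreover have "set (alt_word s t (m - 1)) \<subseteq> {..<n}"
    using set_alt_word[of s t "m - 1"] assms(2,3) by auto
  ultimately show False
    using reduced_length_le[OF red] by fastforce
qed

lemma reduced_snoc_alt_word:
  assumes "\<forall>i<n. M i i = 2" "s \<noteq> t" "set w \<subseteq> {s, t}" "reduced n M (w @ [s])"
  shows "w = alt_word s t (length w)"
  using assms(3,4)
proof (induction w)
  case (Cons c w)
  define k where "k = length w"
  have "reduced n M (w @ [s])"
    using reduced_appendD2[of n M "[c]" "w @ [s]"] Cons.prems(2) by simp
  then have w: "w = alt_word s t k"
    unfolding k_def by (rule Cons.IH[rotated]) (use Cons.prems(1) in simp)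
  have "c \<noteq> hd (w @ [s])"
  proof
    assume "c = hd (w @ [s])"
    then have "(c # w) @ [s] = [] @ [c, c] @ tl (w @ [s])"
      by (cases w) auto
    with Cons.prems(2) have "reduced n M ([] @ [c, c] @ tl (w @ [s]))"
      by simp
    with not_reduced_double[of n M "[]" c] assms(1) show False
      by blast
  qed
  with Cons.prems(1) assms(2) have "c = (if even k then t else s)"
    by (auto simp: w hd_alt_word_snoc)
  then show ?case
    by (simp add: w k_def[symmetric])
qed simp

text \<open>The word is alternating; when \<open>M s t * M t s = 4 cos\<^sup>2 (\<pi> / m)\<close> the braid relation
  bounds its length by \<open>m\<close>, and up to there the Chebyshev coefficients are nonnegative.\<close>
lemma reduced_snoc_rank2_nonneg:
  assumes "egcm n M" "s < n" "t < n" "s \<noteq> t" "set w \<subseteq> {s, t}" "reduced n M (w @ [s])"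
  shows "\<exists>c d. 0 \<le> c \<and> 0 \<le> d \<and> word_act n M w (alpha s) = (\<lambda>l. c * alpha s l + d * alpha t l)"
proof -
  define k where "k = length w"
  have w: "w = alt_word s t k"
    using reduced_snoc_alt_word[OF egcm_diag[OF assms(1)] assms(4-6)] by (simp add: k_def)
  have closed_nonneg:
      "\<exists>c d. 0 \<le> c \<and> 0 \<le> d \<and> word_act n M w (alpha s) = (\<lambda>l. c * alpha s l + d * alpha t l)"
    if "0 \<le> y" "y * y = M s t * M t s" "0 \<le> chebU y k" "0 \<le> chebU y (Suc k)" for y
  proof -
    let ?c = "if even k then chebU y (Suc k) else chebU y k"
    let ?d = "- M t s / y * (if even k then chebU y k else chebU y (Suc k))"
    have "0 \<le> - M t s / y"
      using egcm_off_diag_nonpos[OF assms(1,3,2)] assms(4) that(1)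
      by (simp add: divide_nonpos_nonneg)
    then have "0 \<le> ?d"
      using that(3,4) by (intro mult_nonneg_nonneg) auto
    moreover have "word_act n M w (alpha s) = (\<lambda>l. ?c * alpha s l + ?d * alpha t l)"
      unfolding w using egcm_diag[OF assms(1)] assms(2,3)
      by (intro word_act_alt_word_alpha[OF assms(2-4) _ _
          square_eq_mult_div_identities[OF that(2) egcm_eq_0_iff[OF assms(1-3)]]]) simp_all
    ultimately show ?thesis
      using that(3,4) by (intro exI[of _ ?c] exI[of _ ?d]) simp
  qed
  from assms(1-3) show ?thesis
  proof (cases rule: egcm_pair_cases)
    case 1
    then have "2 \<le> sqrt (M s t * M t s)"
      by (metis real_sqrt_four real_sqrt_le_iff)
    then show ?thesis
      using 1 closed_nonneg[of "sqrt (M s t * M t s)"] chebU_nonneg_mono by simp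
  next
    case (2 m)
    have "reduced n M (alt_word t s (Suc k))"
      using assms(6) unfolding w alt_word_Suc_snoc .
    then have "k < m"
      using reduced_alt_word_shorter_than_braid[OF egcm_diag[OF assms(1)] assms(2,3) _
          braid_relation[OF assms(1-4) 2]] 2(1) by simp
    moreover have "0 \<le> 2 * cos (pi / real m)"
    proof -
      have "0 \<le> pi / real m" "pi / real m \<le> pi / 2"
        using 2(1) by (auto simp: field_simps)
      then show ?thesis
        using cos_ge_zero[of "pi / real m"] by linarith
    qed
    ultimately show ?thesis
      using 2 closed_nonneg[of "2 * cos (pi / real m)"] chebU_cos_pi_div(1)[OF 2(1)]
      by (simp add: power2_eq_square)
  qed
qed

section \<open>Roots are positive or negative\<close>

text \<open>Take \<open>x\<close> of minimal length: if \<open>x @ [r]\<close> were not reduced for some \<open>r \<in> {s, t}\<close>,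
  moving the letter \<open>r\<close> into the tail \<open>y\<close> would shorten \<open>x\<close>.\<close>
lemma reduced_parabolic_factorization:
  assumes "\<forall>i<n. M i i = 2" "reduced n M (w @ [t])" "s < n"
  obtains x y where "set y \<subseteq> {s, t}" "word_act n M (x @ y) = word_act n M (w @ [t])"
    "length x + length y = Suc (length w)" "length x \<le> length w"
    "reduced n M (x @ [s])" "reduced n M (x @ [t])"
proof -
  have t: "t < n" and w: "set w \<subseteq> {..<n}"
    using reduced_set[OF assms(2)] by auto
  define P where "P x \<longleftrightarrow> (\<exists>y. set x \<subseteq> {..<n} \<and> set y \<subseteq> {s, t} \<and>
    word_act n M (x @ y) = word_act n M (w @ [t]) \<and> length x + length y \<le> Suc (length w))" for x
  have "P w"
    unfolding P_def using w by (intro exI[of _ "[t]"]) simp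
  then obtain x where "P x" and min: "\<And>x'. P x' \<Longrightarrow> length x \<le> length x'"
    using ex_has_least_nat[of P w length] by blast
  obtain y where x: "set x \<subseteq> {..<n}" "set y \<subseteq> {s, t}"
      "word_act n M (x @ y) = word_act n M (w @ [t])" "length x + length y \<le> Suc (length w)"
    using \<open>P x\<close> unfolding P_def by blast
  have "set (x @ y) \<subseteq> {..<n}"
    using x(1,2) assms(3) t by auto
  then have "length (w @ [t]) \<le> length (x @ y)"
    using reduced_length_le[OF assms(2)] x(3) by blast
  with x(4) have len: "length x + length y = Suc (length w)"
    by simp
  then have "reduced n M (x @ y)"
    using reduced_if_same_length[OF assms(2) \<open>set (x @ y) \<subseteq> {..<n}\<close> x(3)] by simp
  then have "reduced n M x"
    by (rule reduced_appendD1)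
  have red: "reduced n M (x @ [r])" if r: "r \<in> {s, t}" for r
  proof (rule ccontr)
    assume "\<not> reduced n M (x @ [r])"
    moreover have "r < n" "M r r = 2"
      using r assms(1,3) t by auto
    ultimately obtain u where u: "set u \<subseteq> {..<n}" "word_act n M u = word_act n M (x @ [r])"
        "length u + 1 = length x"
      using not_reduced_snoc_shorter[OF assms(1) \<open>reduced n M x\<close>] by blast
    have "word_act n M (u @ r # y) = word_act n M (x @ y)"
      using u(2) \<open>r < n\<close> \<open>M r r = 2\<close> by (simp add: word_act_append fun_eq_iff refl_refl)
    moreover have "set (r # y) \<subseteq> {s, t}" "length u + length (r # y) \<le> Suc (length w)"
      using r x(2) u(3) len by auto
    ultimately have "P u"
      unfolding P_def using u(1) x(3) by metis
    then have "length x \<le> length u"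
      by (rule min)
    with u(3) show False
      by simp
  qed
  show ?thesis
    using red[of s] red[of t] by (intro that[OF x(2,3) len min[OF \<open>P w\<close>]]) simp_all
qed

lemma reduced_snoc_imp_nonneg:
  assumes "egcm n M" "reduced n M (w @ [s])" "k < n"
  shows "0 \<le> word_act n M w (alpha s) k"
  using assms(2,3)
proof (induction "length w" arbitrary: w s k rule: less_induct)
  case less
  have diag: "\<forall>i<n. M i i = 2"
    using egcm_diag[OF assms(1)] .
  show ?case
  proof (cases w rule: rev_exhaust)
    case Nil
    then show ?thesis
      by (simp add: alpha_def)
  next
    case (snoc w' t)
    have "s < n" "t < n"
      using reduced_set[OF less.prems(1)] snoc by auto
    have "t \<noteq> s"
      using not_reduced_double[of n M w' s "[]"] diag less.prems(1) snoc by auto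
    have "reduced n M (w' @ [t])"
      using reduced_appendD1[of n M w "[s]"] less.prems(1) snoc by simp
    then obtain x y where y: "set y \<subseteq> {s, t}" "word_act n M (x @ y) = word_act n M w"
        "length x + length y = length w" and "length x \<le> length w'"
        and x: "reduced n M (x @ [s])" "reduced n M (x @ [t])"
      using reduced_parabolic_factorization[of n M, OF diag _ \<open>s < n\<close>] snoc
      by (metis length_append_singleton)
    then have "length x < length w"
      using snoc by simp
    have x_nonneg: "0 \<le> word_act n M x (alpha s) l" "0 \<le> word_act n M x (alpha t) l"
      if "l < n" for l
      using less.hyps[OF \<open>length x < length w\<close> x(1) that]
        less.hyps[OF \<open>length x < length w\<close> x(2) that] by simp_all
    have "set (x @ y @ [s]) \<subseteq> {..<n}"
      using reduced_set[OF x(1)] y(1) \<open>s < n\<close> \<open>t < n\<close> by auto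
    moreover have "word_act n M (x @ y @ [s]) = word_act n M (w @ [s])"
      using y(2) by (simp add: word_act_append flip: comp_assoc)
    ultimately have "reduced n M (x @ y @ [s])"
      using reduced_if_same_length[OF less.prems(1)] y(3) by simp
    then have "reduced n M (y @ [s])"
      by (rule reduced_appendD2)
    then obtain c d where cd: "0 \<le> c" "0 \<le> d"
        "word_act n M y (alpha s) = (\<lambda>l. c * alpha s l + d * alpha t l)"
      using reduced_snoc_rank2_nonneg[OF assms(1) \<open>s < n\<close> \<open>t < n\<close> \<open>t \<noteq> s\<close>[symmetric] y(1)]
      by blast
    have "word_act n M w (alpha s) = word_act n M x (word_act n M y (alpha s))"
      using y(2) by (simp add: word_act_append fun_eq_iff)
    also have "\<dots> = (\<lambda>l. c * word_act n M x (alpha s) l + d * word_act n M x (alpha t) l)"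
      by (simp add: cd(3) word_act_add word_act_smult)
    finally show ?thesis
      using cd(1,2) x_nonneg less.prems(2) by simp
  qed
qed

lemma root_nonneg_or_nonpos:
  assumes "egcm n M" "v \<in> roots n M"
  shows "(\<forall>k<n. 0 \<le> v k) \<or> (\<forall>k<n. v k \<le> 0)"
proof -
  have diag: "\<forall>i<n. M i i = 2"
    using egcm_diag[OF assms(1)] .
  obtain w i where "set w \<subseteq> {..<n}" "i < n" and v: "v = word_act n M w (alpha i)"
    using roots_eq_word_act_alpha[OF assms(2)] by blast
  then obtain u where u: "reduced n M u" "word_act n M u = word_act n M w"
    using reduced_exists by blast
  show ?thesis
  proof (cases "reduced n M (u @ [i])")
    case True
    then show ?thesis
      using reduced_snoc_imp_nonneg[OF assms(1) True] u(2) v by auto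
  next
    case False
    then obtain u' where u': "set u' \<subseteq> {..<n}" "word_act n M u' = word_act n M (u @ [i])"
        "length u' + 1 = length u"
      using not_reduced_snoc_shorter[OF diag u(1) \<open>i < n\<close>] by blast
    have "word_act n M (u' @ [i]) = word_act n M u"
      using u'(2) diag \<open>i < n\<close> by (simp add: word_act_append fun_eq_iff refl_refl)
    then have "reduced n M (u' @ [i])"
      using reduced_if_same_length[OF u(1)] u' \<open>i < n\<close> by simp
    have "v = word_act n M (u' @ [i]) (alpha i)"
      using v u(2) \<open>word_act n M (u' @ [i]) = word_act n M u\<close> by simp
    also have "\<dots> = word_act n M u' (\<lambda>k. - alpha i k)"
      using refl_alpha_self[of i n M] diag \<open>i < n\<close> by (simp add: word_act_append)
    also have "\<dots> = (\<lambda>k. - word_act n M u' (alpha i) k)"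
      by (rule word_act_uminus)
    finally show ?thesis
      using reduced_snoc_imp_nonneg[OF assms(1) \<open>reduced n M (u' @ [i])\<close>] by auto
  qed
qed

section \<open>Finiteness\<close>

lemma span_simple_coord_eq_0: "v \<in> span_simple J \<Longrightarrow> k \<notin> J \<Longrightarrow> v k = 0"
  by (auto simp: span_simple_def alpha_def intro!: sum.neutral)

text \<open>A positive root \<open>v\<close> with \<open>v k = 0 < v j\<close> is \<open>s\<^sub>k\<close> applied to the positive root
  \<open>s\<^sub>k v\<close>, whose \<open>k\<close>-th coordinate \<open>- (\<Sum>l<n. M k l * v l) \<ge> - M k j * v j\<close> is positive.\<close>
lemma finite_pos_roots_coord_edge:
  assumes "egcm n M" "finite {v \<in> pos_roots n M. 0 < v k}" "(k, j) \<in> egcm_edges n M"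
  shows "finite {v \<in> pos_roots n M. 0 < v j}"
proof -
  have kj: "k < n" "j < n" "k \<noteq> j" "M k j < 0"
    using assms(3) egcm_off_diag_nonpos[OF assms(1)] by (force simp: egcm_edges_def)+
  have "{v \<in> pos_roots n M. 0 < v j}
      \<subseteq> {v \<in> pos_roots n M. 0 < v k} \<union> refl n M k ` {v \<in> pos_roots n M. 0 < v k}"
  proof
    fix v
    assume v: "v \<in> {v \<in> pos_roots n M. 0 < v j}"
    then have root: "v \<in> roots n M" and nonneg: "\<forall>l<n. 0 \<le> v l" and "0 < v j"
      by (auto simp: pos_roots_def)
    show "v \<in> {v \<in> pos_roots n M. 0 < v k} \<union> refl n M k ` {v \<in> pos_roots n M. 0 < v k}"
    proof (cases "0 < v k")
      case True
      with v show ?thesis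
        by blast
    next
      case False
      with nonneg kj(1) have "v k = 0"
        by force
      have "M k l * v l \<le> 0" if "l < n" for l
        using egcm_off_diag_nonpos[OF assms(1) kj(1) that] nonneg that \<open>v k = 0\<close>
        by (cases "l = k") (auto simp: mult_nonpos_nonneg)
      then have "(\<Sum>l\<in>{..<n} - {j}. M k l * v l) \<le> 0"
        by (intro sum_nonpos) auto
      moreover have "M k j * v j < 0"
        using kj(4) \<open>0 < v j\<close> by (simp add: mult_neg_pos)
      ultimately have "(\<Sum>l<n. M k l * v l) < 0"
        using kj(2) by (simp add: sum.remove)
      moreover have "refl n M k v \<in> roots n M"
        using root kj(1) by (rule roots.reflect)
      ultimately have "refl n M k v \<in> {v \<in> pos_roots n M. 0 < v k}"
        using nonneg \<open>v k = 0\<close> by (auto simp: pos_roots_def refl_def)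
      moreover have "v = refl n M k (refl n M k v)"
        using refl_refl[of k n M] kj(1) egcm_diag[OF assms(1)] by simp
      ultimately show ?thesis
        by blast
    qed
  qed
  then show ?thesis
    using assms(2) by (meson finite_UnI finite_imageI finite_subset)
qed

lemma finite_pos_roots_if_finite_coord:
  assumes "egcm n M" "egcm_connected n M" "k < n" "finite {v \<in> pos_roots n M. 0 < v k}"
  shows "finite (pos_roots n M)"
proof -
  have "finite {v \<in> pos_roots n M. 0 < v j}" if "j < n" for j
  proof -
    have "(k, j) \<in> (egcm_edges n M)\<^sup>*"
      using assms(2,3) that by (simp add: egcm_connected_def)
    then show ?thesis
      by (induction rule: rtrancl_induct) (use assms(4) finite_pos_roots_coord_edge[OF assms(1)] in blast)+
  qed
  moreover have "pos_roots n M \<subseteq> (\<Union>j<n. {v \<in> pos_roots n M. 0 < v j})"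
    using nonneg_root_has_pos_coord[of n M, OF egcm_diag[OF assms(1)]] by (fastforce simp: pos_roots_def)
  ultimately show ?thesis
    by (auto intro: finite_subset)
qed

lemma finite_roots_if_finite_pos_roots:
  assumes "egcm n M" "finite (pos_roots n M)"
  shows "finite (roots n M)"
proof -
  have "roots n M \<subseteq> pos_roots n M \<union> (\<lambda>v k. - v k) ` pos_roots n M"
  proof
    fix v
    assume v: "v \<in> roots n M"
    then have "(\<lambda>k. - v k) \<in> roots n M"
      using roots_uminus[of n M, OF egcm_diag[OF assms(1)]] by blast
    with v root_nonneg_or_nonpos[OF assms(1) v] have "v \<in> pos_roots n M \<or> (\<lambda>k. - v k) \<in> pos_roots n M"
      by (auto simp: pos_roots_def)
    then show "v \<in> pos_roots n M \<union> (\<lambda>v k. - v k) ` pos_roots n M"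
      by (auto intro: rev_image_eqI[of "\<lambda>k. - v k"])
  qed
  then show ?thesis
    using assms(2) by (meson finite_UnI finite_imageI finite_subset)
qed

theorem proposition4p5:
  fixes n :: nat and M :: "nat \<Rightarrow> nat \<Rightarrow> real" and J :: "nat set"
  assumes "egcm n M"
    and "egcm_connected n M"
    and "infinite (roots n M)"
    and "J \<subset> {..<n}"
  shows "infinite {v \<in> pos_roots n M. v \<notin> span_simple J}"
proof
  assume fin: "finite {v \<in> pos_roots n M. v \<notin> span_simple J}"
  obtain k where "k < n" "k \<notin> J"
    using assms(4) by blast
  then have "{v \<in> pos_roots n M. 0 < v k} \<subseteq> {v \<in> pos_roots n M. v \<notin> span_simple J}"
    using span_simple_coord_eq_0 by fastforce
  with fin have "finite {v \<in> pos_roots n M. 0 < v k}"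
    by (rule finite_subset[rotated])
  with assms(1,2) \<open>k < n\<close> have "finite (pos_roots n M)"
    by (rule finite_pos_roots_if_finite_coord)
  with assms(1,3) show False
    using finite_roots_if_finite_pos_roots by blast
qed

end
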